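(* Let $q,n,d$ be positive integers with $q\ge2$ and $qd=(q-1)n$. Then for every code $C\subseteq[q]^n$ with $|C|=qn-1$ and minimum Hamming distance at least $d$, there exists $u\in[q]^n\setminus C$ such that $C\cup\{u\}$ has minimum Hamming distance at least $d$.
   Context: $[q]=\{0,\dots,q-1\}$; the Hamming distance of two words is the number of coordinates in which they differ; the minimum distance of a code is the minimum Hamming distance between distinct codewords. *)

theory Defs
  imports Main "HOL-Library.FuncSet"
begin

text \<open>Words of length n over the alphabet [q] = {0..q-1}: extensional functions
  on the coordinate set {0..<n} with values in {0..<q}.\<close>
definition words :: "nat \<Rightarrow> nat \<Rightarrow> (nat \<Rightarrow> nat) set" where
  "words q n = PiE {0..<n} (\<lambda>_. {0..<q})"

definition hamming_dist :: "nat \<Rightarrow> (nat \<Rightarrow> nat) \<Rightarrow> (nat \<Rightarrow> nat) \<Rightarrow> nat" where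
  "hamming_dist n x y = card {i \<in> {0..<n}. x i \<noteq> y i}"

definition min_dist_ge :: "nat \<Rightarrow> (nat \<Rightarrow> nat) set \<Rightarrow> nat \<Rightarrow> bool" where
  "min_dist_ge n C d \<longleftrightarrow> (\<forall>x\<in>C. \<forall>y\<in>C. x \<noteq> y \<longrightarrow> hamming_dist n x y \<ge> d)"

end

theory Submission
  imports Defs
begin

text \<open>
  Fix a coordinate i and a symbol c and shorten C to the codewords with c at position i. Since
  q d = (q - 1) n, two such words agree in at most (n - q)/q of the remaining n - 1 positions.
  Counting agreements column by column (Plotkin's argument) bounds the squared imbalance of the
  columns of a shortened code with K words by q K (q - 1) (n - K). Hence every symbol occurs at
  most n times in every column of C, and one occurring exactly n times gives perfectly balanced
  columns. As |C| = q n - 1, each column j lacks exactly one occurrence of exactly one symbol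
  u_j; the word u = (u_j) is the one to add.

  For z in C agreeing with u at some position i, the column counts of the code shortened at
  (i, u_i) are known and make Plotkin's bound tight. Tightness forces the agreement row sum of z
  to be extremal, and computing that row sum from the column counts gives d(z, u) = d. Words
  differing from u everywhere are at distance n \<ge> d.
\<close>

definition agreements :: "nat set \<Rightarrow> (nat \<Rightarrow> nat) \<Rightarrow> (nat \<Rightarrow> nat) \<Rightarrow> nat" where
  "agreements J x y = card {j \<in> J. x j = y j}"

definition symbol_count :: "(nat \<Rightarrow> nat) set \<Rightarrow> nat \<Rightarrow> nat \<Rightarrow> nat" where
  "symbol_count D j b = card {x \<in> D. x j = b}"

definition column_deviation :: "nat \<Rightarrow> nat set \<Rightarrow> (nat \<Rightarrow> nat) set \<Rightarrow> int" where
  "column_deviation q J D =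
     (\<Sum>j\<in>J. \<Sum>b\<in>{0..<q}. (int q * int (symbol_count D j b) - int (card D)) ^ 2)"

lemma card_filter_eq_sum:
  "finite A \<Longrightarrow> card {x \<in> A. P x} = (\<Sum>x\<in>A. if P x then 1 else 0)"
  using sum.inter_filter[of A "\<lambda>_. 1::nat" P] by simp

lemma hamming_dist_add_agreements: "hamming_dist n x y + agreements {0..<n} x y = n"
proof -
  have "card ({i \<in> {0..<n}. x i \<noteq> y i} \<union> {i \<in> {0..<n}. x i = y i})
      = hamming_dist n x y + agreements {0..<n} x y"
    unfolding hamming_dist_def agreements_def by (rule card_Un_disjoint) auto
  moreover have "{i \<in> {0..<n}. x i \<noteq> y i} \<union> {i \<in> {0..<n}. x i = y i} = {0..<n}" by auto
  ultimately show ?thesis by simp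
qed

lemma agreements_remove:
  assumes "finite J" "i \<in> J" "x i = y i"
  shows "agreements J x y = agreements (J - {i}) x y + 1"
proof -
  have "{j \<in> J. x j = y j} = insert i {j \<in> J - {i}. x j = y j}" using assms by auto
  then show ?thesis using assms(1) by (simp add: agreements_def)
qed

lemma card_punctured: "i < n \<Longrightarrow> int (card ({0..<n} - {i})) = int n - 1"
  by simp

lemma hamming_dist_commute: "hamming_dist n x y = hamming_dist n y x"
  unfolding hamming_dist_def by (intro arg_cong[where f = card] Collect_cong) auto

lemma sum_by_symbol:
  fixes g :: "(nat \<Rightarrow> nat) \<Rightarrow> 'b::comm_monoid_add"
  assumes "finite D" "\<And>x. x \<in> D \<Longrightarrow> x j < q"
  shows "(\<Sum>x\<in>D. g x) = (\<Sum>b\<in>{0..<q}. \<Sum>x\<in>{x \<in> D. x j = b}. g x)"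
proof -
  have "(\<lambda>x. x j) ` D \<subseteq> {0..<q}" using assms(2) by auto
  from sum.group[OF assms(1) finite_atLeastLessThan this, of g] show ?thesis by simp
qed

lemma sum_symbol_count:
  assumes "finite D" "\<And>x. x \<in> D \<Longrightarrow> x j < q"
  shows "(\<Sum>b\<in>{0..<q}. symbol_count D j b) = card D"
  using sum_by_symbol[OF assms, where g = "\<lambda>_. 1::nat"] by (simp add: symbol_count_def)

lemma sum_symbol_count_self:
  assumes "finite D" "\<And>x. x \<in> D \<Longrightarrow> x j < q"
  shows "(\<Sum>x\<in>D. symbol_count D j (x j)) = (\<Sum>b\<in>{0..<q}. symbol_count D j b ^ 2)"
proof -
  have "(\<Sum>x\<in>D. symbol_count D j (x j))
      = (\<Sum>b\<in>{0..<q}. \<Sum>x\<in>{x \<in> D. x j = b}. symbol_count D j (x j))"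
    by (rule sum_by_symbol[OF assms])
  also have "\<dots> = (\<Sum>b\<in>{0..<q}. \<Sum>x\<in>{x \<in> D. x j = b}. symbol_count D j b)"
    by (intro sum.cong) auto
  finally show ?thesis by (simp add: symbol_count_def power2_eq_square)
qed

lemma symbol_count_eq_sum_fibers:
  assumes "finite D" "\<And>x. x \<in> D \<Longrightarrow> x i < q"
  shows "symbol_count D j b = (\<Sum>c\<in>{0..<q}. symbol_count {x \<in> D. x i = c} j b)"
proof -
  have "symbol_count D j b = (\<Sum>c\<in>{0..<q}. card {x \<in> {x \<in> D. x j = b}. x i = c})"
    using sum_by_symbol[of "{x \<in> D. x j = b}" i q "\<lambda>_. 1::nat"] assms
    by (simp add: symbol_count_def)
  also have "\<dots> = (\<Sum>c\<in>{0..<q}. symbol_count {x \<in> D. x i = c} j b)"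
    unfolding symbol_count_def by (intro sum.cong refl arg_cong[where f = card]) auto
  finally show ?thesis .
qed

lemma sum_agreements_eq_sum_symbol_count:
  assumes "finite D" "finite J"
  shows "(\<Sum>y\<in>D. agreements J x y) = (\<Sum>j\<in>J. symbol_count D j (x j))"
proof -
  have "(\<Sum>y\<in>D. agreements J x y) = (\<Sum>y\<in>D. \<Sum>j\<in>J. if x j = y j then 1 else 0)"
    using assms by (simp add: agreements_def card_filter_eq_sum)
  also have "\<dots> = (\<Sum>j\<in>J. \<Sum>y\<in>D. if x j = y j then 1 else 0)"
    by (rule sum.swap)
  also have "\<dots> = (\<Sum>j\<in>J. symbol_count D j (x j))"
    using assms by (simp add: symbol_count_def card_filter_eq_sum eq_commute)
  finally show ?thesis .
qed

lemma sum_square_deviation: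
  fixes c :: "'a \<Rightarrow> int"
  assumes "finite B" "sum c B = K"
  shows "(\<Sum>b\<in>B. (int (card B) * c b - K) ^ 2)
       = int (card B) ^ 2 * (\<Sum>b\<in>B. (c b) ^ 2) - int (card B) * K ^ 2"
proof -
  have "(\<Sum>b\<in>B. (int (card B) * c b - K) ^ 2)
      = (\<Sum>b\<in>B. int (card B) ^ 2 * (c b) ^ 2 - 2 * int (card B) * K * c b + K ^ 2)"
    by (intro sum.cong refl) (simp add: power2_eq_square algebra_simps)
  also have "\<dots> = int (card B) ^ 2 * (\<Sum>b\<in>B. (c b) ^ 2) - 2 * int (card B) * K * sum c B
                  + int (card B) * K ^ 2"
    by (simp add: sum.distrib sum_subtractf sum_distrib_left)
  finally show ?thesis using assms(2) by (simp add: power2_eq_square)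
qed

lemma column_deviation_nonneg: "column_deviation q J D \<ge> 0"
  unfolding column_deviation_def by (intro sum_nonneg) simp

lemma column_deviation_eq_0D:
  assumes "finite J" "column_deviation q J D = 0" "j \<in> J" "b < q"
  shows "int q * int (symbol_count D j b) = int (card D)"
proof -
  have "\<forall>j\<in>J. \<forall>b\<in>{0..<q}. (int q * int (symbol_count D j b) - int (card D)) ^ 2 = 0"
    using assms(2) unfolding column_deviation_def
    by (simp add: sum_nonneg_eq_0_iff[OF assms(1)] sum_nonneg_eq_0_iff sum_nonneg)
  then show ?thesis using assms(3,4) by simp
qed

locale finite_code =
  fixes q :: nat and J :: "nat set" and D :: "(nat \<Rightarrow> nat) set"
  assumes finite_J: "finite J" and finite_D: "finite D"
    and symbol_lt: "\<And>x j. x \<in> D \<Longrightarrow> j \<in> J \<Longrightarrow> x j < q"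
begin

lemma column_deviation_eq:
  "column_deviation q J D
     = int q * (int q * int (\<Sum>x\<in>D. \<Sum>y\<in>D. agreements J x y) - int (card J) * int (card D) ^ 2)"
proof -
  have column: "(\<Sum>b\<in>{0..<q}. (int q * int (symbol_count D j b) - int (card D)) ^ 2)
      = int q * (int q * int (\<Sum>x\<in>D. symbol_count D j (x j)) - int (card D) ^ 2)"
    if "j \<in> J" for j
  proof -
    have "(\<Sum>b\<in>{0..<q}. int (symbol_count D j b)) = int (card D)"
      using sum_symbol_count[OF finite_D, of j q] symbol_lt that by (simp flip: of_nat_sum)
    from sum_square_deviation[OF _ this] show ?thesis
      using sum_symbol_count_self[OF finite_D, of j q] symbol_lt that
      by (simp add: power2_eq_square algebra_simps flip: of_nat_sum of_nat_mult)
  qed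
  have "column_deviation q J D
      = (\<Sum>j\<in>J. int q * (int q * int (\<Sum>x\<in>D. symbol_count D j (x j)) - int (card D) ^ 2))"
    unfolding column_deviation_def by (intro sum.cong refl column)
  also have "\<dots> = int q * (int q * int (\<Sum>j\<in>J. \<Sum>x\<in>D. symbol_count D j (x j))
                             - int (card J) * int (card D) ^ 2)"
    by (simp add: right_diff_distrib sum_subtractf sum_distrib_left of_nat_sum)
  also have "(\<Sum>j\<in>J. \<Sum>x\<in>D. symbol_count D j (x j)) = (\<Sum>x\<in>D. \<Sum>y\<in>D. agreements J x y)"
    using sum_agreements_eq_sum_symbol_count[OF finite_D finite_J] sum.swap by simp
  finally show ?thesis .
qed

lemma sum_row_agreements:
  "int q * int (\<Sum>x\<in>D. \<Sum>y\<in>D. agreements J x y) = (\<Sum>x\<in>D. int q * int (\<Sum>y\<in>D. agreements J x y))"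
  by (simp add: sum_distrib_left)

end

locale bounded_agreement_code = finite_code +
  fixes s :: int
  assumes agreements_le:
    "\<And>x y. x \<in> D \<Longrightarrow> y \<in> D \<Longrightarrow> x \<noteq> y \<Longrightarrow> int q * int (agreements J x y) \<le> s"
begin

lemma row_agreements_le:
  assumes "x \<in> D"
  shows "int q * int (\<Sum>y\<in>D. agreements J x y) \<le> int q * int (card J) + (int (card D) - 1) * s"
proof -
  have "int q * int (\<Sum>y\<in>D. agreements J x y)
      = int q * int (card J) + (\<Sum>y\<in>D - {x}. int q * int (agreements J x y))"
    using sum.remove[OF finite_D assms, of "agreements J x"]
    by (simp add: agreements_def sum_distrib_left algebra_simps)
  also have "(\<Sum>y\<in>D - {x}. int q * int (agreements J x y)) \<le> (\<Sum>y\<in>D - {x}. s)"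
    by (rule sum_mono) (use agreements_le assms in auto)
  also have "\<dots> = (int (card D) - 1) * s"
  proof -
    have "card D > 0" using assms finite_D card_gt_0_iff by blast
    then have "int (card D - 1) = int (card D) - 1" by linarith
    then show ?thesis using assms finite_D by (simp add: card_Diff_singleton)
  qed
  finally show ?thesis by simp
qed

lemma column_deviation_le:
  "column_deviation q J D
     \<le> int q * int (card D) * (int q * int (card J) + (int (card D) - 1) * s - int (card J) * int (card D))"
proof -
  define K where "K = int (card D)"
  define B where "B = int q * int (card J) + (K - 1) * s"
  have "int q * int (\<Sum>x\<in>D. \<Sum>y\<in>D. agreements J x y) \<le> (\<Sum>x\<in>D. B)"
    unfolding sum_row_agreements B_def K_def by (rule sum_mono) (rule row_agreements_le)
  then have "column_deviation q J D \<le> int q * (K * B - int (card J) * K ^ 2)"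
    unfolding column_deviation_eq K_def by (intro mult_left_mono) auto
  also have "\<dots> = int q * K * (B - int (card J) * K)"
    by (simp add: power2_eq_square algebra_simps)
  finally show ?thesis unfolding B_def K_def .
qed

lemma row_agreements_eq:
  assumes "q > 0" and "x \<in> D"
    and "column_deviation q J D
      = int q * int (card D) * (int q * int (card J) + (int (card D) - 1) * s - int (card J) * int (card D))"
  shows "int q * int (\<Sum>y\<in>D. agreements J x y) = int q * int (card J) + (int (card D) - 1) * s"
proof (rule sum_mono_inv[OF _ row_agreements_le assms(2) finite_D])
  define K where "K = int (card D)"
  define B where "B = int q * int (card J) + (K - 1) * s"
  have "int q * (int q * int (\<Sum>x\<in>D. \<Sum>y\<in>D. agreements J x y) - int (card J) * K ^ 2)
      = int q * (K * B - int (card J) * K ^ 2)"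
    using assms(3) unfolding column_deviation_eq B_def K_def
    by (simp add: power2_eq_square algebra_simps)
  then have "int q * int (\<Sum>x\<in>D. \<Sum>y\<in>D. agreements J x y) = (\<Sum>x\<in>D. B)"
    using assms(1) by (simp add: K_def)
  then show "(\<Sum>x\<in>D. int q * int (\<Sum>y\<in>D. agreements J x y))
      = (\<Sum>x\<in>D. int q * int (card J) + (int (card D) - 1) * s)"
    unfolding sum_row_agreements B_def K_def .
qed

end

locale plotkin_extremal_code =
  fixes q n d :: nat and C :: "(nat \<Rightarrow> nat) set"
  assumes q_ge_2: "q \<ge> 2" and n_pos: "n > 0" and plotkin_eq: "q * d = (q - 1) * n"
    and code_words: "C \<subseteq> words q n" and card_C: "card C = q * n - 1"
    and min_dist: "min_dist_ge n C d"
begin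

abbreviation fiber :: "nat \<Rightarrow> nat \<Rightarrow> (nat \<Rightarrow> nat) set" where
  "fiber i c \<equiv> {x \<in> C. x i = c}"

lemma finite_C: "finite C"
  using code_words by (rule finite_subset) (simp add: words_def finite_PiE)

lemma codeword_lt: "x \<in> C \<Longrightarrow> j < n \<Longrightarrow> x j < q"
  using code_words by (auto simp: words_def PiE_iff)

lemma q_mult_d_add_n: "q * d + n = q * n"
  using plotkin_eq q_ge_2 by (simp add: diff_mult_distrib)

lemma d_le_n: "d \<le> n"
proof -
  have "q * d \<le> q * n" using q_mult_d_add_n by linarith
  then show ?thesis using q_ge_2 by simp
qed

lemma fiber_agreements_le:
  assumes "x \<in> C" "y \<in> C" "x \<noteq> y" "i < n" "x i = y i"
  shows "int q * int (agreements ({0..<n} - {i}) x y) \<le> int n - int q"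
proof -
  let ?a = "agreements ({0..<n} - {i}) x y"
  have "d \<le> hamming_dist n x y" using min_dist assms(1-3) unfolding min_dist_ge_def by blast
  then have "q * d \<le> q * hamming_dist n x y" by simp
  moreover have "hamming_dist n x y + ?a + 1 = n"
    using hamming_dist_add_agreements[of n x y] agreements_remove[of "{0..<n}" i x y] assms(4,5)
    by simp
  then have "q * hamming_dist n x y + q * ?a + q = q * n"
    by (metis add_mult_distrib2 nat_mult_1_right)
  ultimately have "q * ?a + q \<le> n" using q_mult_d_add_n by linarith
  then have "int (q * ?a + q) \<le> int n" by (simp only: of_nat_le_iff)
  then show ?thesis by simp
qed

lemma fiber_bounded: "i < n \<Longrightarrow> bounded_agreement_code q ({0..<n} - {i}) (fiber i c) (int n - int q)"
  by unfold_locales (auto intro: fiber_agreements_le codeword_lt simp: finite_C)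

lemma card_fiber: "card (fiber i c) = symbol_count C i c"
  by (simp add: symbol_count_def)

lemma column_deviation_fiber_le:
  assumes "i < n"
  shows "column_deviation q ({0..<n} - {i}) (fiber i c)
       \<le> int q * int (symbol_count C i c) * (int q - 1) * (int n - int (symbol_count C i c))"
proof -
  interpret bounded_agreement_code q "{0..<n} - {i}" "fiber i c" "int n - int q"
    using fiber_bounded[OF assms] .
  define K where "K = int (symbol_count C i c)"
  have "column_deviation q ({0..<n} - {i}) (fiber i c)
      \<le> int q * K * (int q * (int n - 1) + (K - 1) * (int n - int q) - (int n - 1) * K)"
    using column_deviation_le unfolding card_punctured[OF assms] card_fiber K_def .
  also have "\<dots> = int q * K * (int q - 1) * (int n - K)"
    by (simp add: algebra_simps)
  finally show ?thesis unfolding K_def .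
qed

lemma symbol_count_le: "i < n \<Longrightarrow> symbol_count C i c \<le> n"
proof (rule ccontr)
  assume "i < n" "\<not> symbol_count C i c \<le> n"
  then have "int q * int (symbol_count C i c) * (int q - 1) * (int n - int (symbol_count C i c)) < 0"
    using q_ge_2 by (intro mult_pos_neg) auto
  then show False
    using column_deviation_fiber_le[OF \<open>i < n\<close>, of c]
      column_deviation_nonneg[of q "{0..<n} - {i}" "fiber i c"] by linarith
qed

lemma full_fiber_balanced:
  assumes "i < n" "symbol_count C i c = n" "j < n" "j \<noteq> i" "b < q"
  shows "int q * int (symbol_count (fiber i c) j b) = int n"
proof -
  have "column_deviation q ({0..<n} - {i}) (fiber i c) = 0"
    using column_deviation_fiber_le[OF assms(1), of c] assms(2)
      column_deviation_nonneg[of q "{0..<n} - {i}" "fiber i c"] by simp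
  from column_deviation_eq_0D[OF _ this] show ?thesis
    using assms by (simp add: card_fiber)
qed

lemma column_symbol_counts:
  assumes "i < n"
  shows "\<exists>a<q. symbol_count C i a = n - 1 \<and> (\<forall>b<q. b \<noteq> a \<longrightarrow> symbol_count C i b = n)"
proof -
  have "(\<Sum>b\<in>{0..<q}. symbol_count C i b) = q * n - 1"
    using sum_symbol_count[OF finite_C, of i q] codeword_lt assms card_C by auto
  moreover have "q * n \<ge> 1" using q_ge_2 n_pos by simp
  ultimately have "(\<Sum>b\<in>{0..<q}. n - symbol_count C i b) = 1"
    using sum_subtractf_nat[of "{0..<q}" "symbol_count C i" "\<lambda>_. n"] symbol_count_le[OF assms]
    by simp
  then have "\<exists>a\<in>{0..<q}. n - symbol_count C i a = 1
      \<and> (\<forall>b\<in>{0..<q}. a \<noteq> b \<longrightarrow> n - symbol_count C i b = 0)"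
    using sum_eq_1_iff[OF finite_atLeastLessThan, of "\<lambda>b. n - symbol_count C i b" 0 q] by blast
  then obtain a where "a < q" "n - symbol_count C i a = 1"
    and "\<forall>b<q. b \<noteq> a \<longrightarrow> n - symbol_count C i b = 0"
    by auto
  moreover have "\<And>b. symbol_count C i b \<le> n" using symbol_count_le[OF assms] .
  ultimately show ?thesis by (metis diff_diff_cancel diff_zero)
qed

definition hole :: "nat \<Rightarrow> nat" where
  "hole = (\<lambda>j\<in>{0..<n}. THE a. a < q \<and> symbol_count C j a = n - 1)"

lemma hole_column:
  assumes "j < n"
  shows "hole j < q \<and> symbol_count C j (hole j) = n - 1
    \<and> (\<forall>b<q. b \<noteq> hole j \<longrightarrow> symbol_count C j b = n)"
proof -
  obtain a where a: "a < q" "symbol_count C j a = n - 1" "\<forall>b<q. b \<noteq> a \<longrightarrow> symbol_count C j b = n"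
    using column_symbol_counts[OF assms] by blast
  have "\<exists>!a. a < q \<and> symbol_count C j a = n - 1"
    using a n_pos by (intro ex1I[of _ a]) auto
  then have "hole j = a" using a assms by (simp add: hole_def the1_equality)
  then show ?thesis using a by simp
qed

lemma hole_in_words: "hole \<in> words q n"
  using hole_column by (auto simp: words_def PiE_iff hole_def)

lemma fiber_hole_symbol_count:
  assumes "i < n" "j < n" "j \<noteq> i" "b < q"
  shows "int q * int (symbol_count (fiber i (hole i)) j b) = int n - (if b = hole j then int q else 0)"
proof -
  have "symbol_count C j b = (\<Sum>c\<in>{0..<q}. symbol_count (fiber i c) j b)"
    using symbol_count_eq_sum_fibers[OF finite_C, of i q j b] codeword_lt assms(1) by blast
  also have "\<dots> = symbol_count (fiber i (hole i)) j b
                   + (\<Sum>c\<in>{0..<q} - {hole i}. symbol_count (fiber i c) j b)"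
    using sum.remove[of "{0..<q}" "hole i"] hole_column[OF assms(1)] by simp
  finally have "int q * int (symbol_count C j b) = int q * int (symbol_count (fiber i (hole i)) j b)
                   + (\<Sum>c\<in>{0..<q} - {hole i}. int q * int (symbol_count (fiber i c) j b))"
    by (simp add: algebra_simps sum_distrib_left)
  also have "(\<Sum>c\<in>{0..<q} - {hole i}. int q * int (symbol_count (fiber i c) j b))
      = (\<Sum>c\<in>{0..<q} - {hole i}. int n)"
    using hole_column[OF assms(1)] assms by (intro sum.cong refl full_fiber_balanced) auto
  also have "\<dots> = (int q - 1) * int n"
    using hole_column[OF assms(1)] by (simp add: of_nat_diff)
  finally show ?thesis
    using hole_column[OF assms(2)] assms(4) n_pos by (auto simp: of_nat_diff algebra_simps)
qed

lemma card_fiber_hole: "i < n \<Longrightarrow> card (fiber i (hole i)) = n - 1"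
  using hole_column by (simp add: card_fiber)

lemma column_deviation_fiber_hole:
  assumes "i < n"
  shows "column_deviation q ({0..<n} - {i}) (fiber i (hole i)) = (int n - 1) * (int q * (int q - 1))"
proof -
  have column: "(\<Sum>b\<in>{0..<q}. (int q * int (symbol_count (fiber i (hole i)) j b)
                                - int (card (fiber i (hole i)))) ^ 2) = int q * (int q - 1)"
    if "j \<in> {0..<n} - {i}" for j
  proof -
    have "(\<Sum>b\<in>{0..<q}. (int q * int (symbol_count (fiber i (hole i)) j b)
                         - int (card (fiber i (hole i)))) ^ 2)
        = (\<Sum>b\<in>{0..<q}. (1 - (if b = hole j then int q else 0)) ^ 2)"
      using that assms n_pos
      by (intro sum.cong refl) (simp add: fiber_hole_symbol_count card_fiber_hole of_nat_diff)
    also have "\<dots> = (1 - int q) ^ 2 + (\<Sum>b\<in>{0..<q} - {hole j}. 1)"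
      using hole_column[of j] that by (simp add: sum.remove[of _ "hole j"])
    also have "\<dots> = int q * (int q - 1)"
      using hole_column[of j] that q_ge_2 by (simp add: of_nat_diff power2_eq_square algebra_simps)
    finally show ?thesis .
  qed
  show ?thesis
    unfolding column_deviation_def using card_punctured[OF assms] by (simp add: column)
qed

lemma agreements_fiber_hole:
  assumes "z \<in> C" "i < n" "z i = hole i"
  shows "int q * int (agreements ({0..<n} - {i}) z hole) = int n - int q"
proof -
  define J where "J = {0..<n} - {i}"
  define F where "F = fiber i (hole i)"
  interpret bounded_agreement_code q J F "int n - int q"
    unfolding J_def F_def using fiber_bounded[OF assms(2)] .
  have zF: "z \<in> F" using assms by (simp add: F_def)
  have card: "int (card F) = int n - 1" "int (card J) = int n - 1"
    using card_fiber_hole[OF assms(2)] n_pos card_punctured[OF assms(2)] by (simp_all add: F_def J_def)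
  have "column_deviation q J F = (int n - 1) * (int q * (int q - 1))"
    unfolding J_def F_def by (rule column_deviation_fiber_hole[OF assms(2)])
  then have "column_deviation q J F
      = int q * int (card F) * (int q * int (card J) + (int (card F) - 1) * (int n - int q)
                                - int (card J) * int (card F))"
    unfolding card by (simp add: algebra_simps)
  from row_agreements_eq[OF _ zF this] q_ge_2
  have row: "int q * int (\<Sum>y\<in>F. agreements J z y) = int q * (int n - 1) + (int n - 2) * (int n - int q)"
    unfolding card by simp
  have "int q * int (\<Sum>y\<in>F. agreements J z y) = (\<Sum>j\<in>J. int q * int (symbol_count F j (z j)))"
    by (simp add: sum_agreements_eq_sum_symbol_count[OF finite_D finite_J] sum_distrib_left)
  also have "\<dots> = (\<Sum>j\<in>J. int n - (if z j = hole j then int q else 0))"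
    using assms codeword_lt unfolding F_def J_def by (intro sum.cong refl fiber_hole_symbol_count) auto
  also have "\<dots> = (int n - 1) * int n - int (agreements J z hole) * int q"
    using sum.inter_filter[OF finite_J, of "\<lambda>_. int q" "\<lambda>j. z j = hole j"] card(2)
    by (simp add: sum_subtractf agreements_def)
  finally have "int (agreements J z hole) * int q
      = (int n - 1) * int n - (int q * (int n - 1) + (int n - 2) * (int n - int q))"
    using row by linarith
  also have "\<dots> = int n - int q"
    by (simp add: algebra_simps)
  finally show ?thesis unfolding J_def by (simp add: mult.commute)
qed

lemma hamming_dist_hole:
  assumes "z \<in> C" "i < n" "z i = hole i"
  shows "hamming_dist n z hole = d"
proof -
  have "hamming_dist n z hole + agreements ({0..<n} - {i}) z hole + 1 = n"
    using hamming_dist_add_agreements[of n z hole] agreements_remove[of "{0..<n}" i z hole] assms(2,3)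
    by simp
  then have "int q * (int (hamming_dist n z hole) + int (agreements ({0..<n} - {i}) z hole) + 1)
      = int q * int n"
    by (metis of_nat_1 of_nat_add)
  then have "int q * int (hamming_dist n z hole) = int q * int n - int n"
    using agreements_fiber_hole[OF assms] by (simp add: algebra_simps)
  also have "\<dots> = int q * int d" using q_mult_d_add_n by (simp flip: of_nat_mult of_nat_add)
  finally show ?thesis using q_ge_2 by simp
qed

lemma hamming_dist_hole_ge:
  assumes "z \<in> C"
  shows "d \<le> hamming_dist n z hole"
proof (cases "\<exists>i<n. z i = hole i")
  case True
  then show ?thesis using hamming_dist_hole[OF assms] by auto
next
  case False
  then have "{i \<in> {0..<n}. z i \<noteq> hole i} = {0..<n}" by auto
  then show ?thesis using d_le_n by (simp add: hamming_dist_def)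
qed

lemma hole_not_in_code: "d > 0 \<Longrightarrow> hole \<notin> C"
  using hamming_dist_hole[of hole 0] n_pos by (auto simp: hamming_dist_def)

lemma min_dist_insert_hole: "min_dist_ge n (insert hole C) d"
  using min_dist hamming_dist_hole_ge hamming_dist_commute
  unfolding min_dist_ge_def by (metis insert_iff)

end

theorem proposition5p14:
  fixes q n d :: nat and C :: "(nat \<Rightarrow> nat) set"
  assumes "q \<ge> 2" and "n > 0" and "d > 0"
    and "q * d = (q - 1) * n"
    and "C \<subseteq> words q n"
    and "card C = q * n - 1"
    and "min_dist_ge n C d"
  shows "\<exists>u \<in> words q n - C. min_dist_ge n (insert u C) d"
proof -
  interpret plotkin_extremal_code q n d C
    using assms by unfold_locales
  show ?thesis
    using hole_in_words hole_not_in_code[OF \<open>d > 0\<close>] min_dist_insert_hole by blast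
qed

end
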